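(* Let $N\in\mathbb N$ or $N=-1$. There is a constant $C_1$ depending only on $\Gamma$ such that for any two distinct points $\tau_1,\tau_2\in\Gamma$ with $|1-\tau_1^2|\le|1-\tau_2^2|$, $$\Big|\frac1{\mathrm w^N(\tau_1)}-\frac1{\mathrm w^N(\tau_2)}\Big|\le C_1|N|\max\Big\{\frac1{|1-\tau_1^2|^{1+N/2}},\frac1{|1-\tau_2^2|^{1+N/2}}\Big\}|\tau_1-\tau_2|.$$
   Context: $\Delta$ is a closed analytic Jordan arc with endpoints $\pm1$, oriented from $-1$ to $1$. $\Gamma$ is an infinitely smooth Jordan curve containing $\Delta$ whose interior domain $\Omega$ lies to the left of $\Delta$. $\mathrm w(z)=\sqrt{z^2-1}$ is the branch holomorphic in $\overline{\mathbb C}\setminus\Delta$ with $\mathrm w(z)/z\to1$ at $\infty$; on $\Gamma$, $\mathrm w$ denotes its boundary values from within $\Omega$ (on $\Delta$ these are the boundary values from the left side). *)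

theory Defs
  imports "HOL-Complex_Analysis.Complex_Analysis"
begin

fun vderivs :: "nat \<Rightarrow> (real \<Rightarrow> complex) \<Rightarrow> real \<Rightarrow> complex" where
  "vderivs 0 g = g"
| "vderivs (Suc k) g = (\<lambda>t. vector_derivative (vderivs k g) (at t))"

definition analytic_arc_param :: "(complex \<Rightarrow> complex) \<Rightarrow> complex \<Rightarrow> complex \<Rightarrow> bool" where
  "analytic_arc_param f a b \<longleftrightarrow>
     (\<exists>S. open S \<and> complex_of_real ` {0..1} \<subseteq> S \<and> f holomorphic_on S) \<and>
     inj_on f (complex_of_real ` {0..1}) \<and>
     (\<forall>t\<in>{0..1::real}. deriv f (complex_of_real t) \<noteq> 0) \<and>
     f 0 = a \<and> f 1 = b"

definition smooth_jordan_param :: "(real \<Rightarrow> complex) \<Rightarrow> bool" where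
  "smooth_jordan_param g \<longleftrightarrow>
     (\<forall>t. g (t + 1) = g t) \<and>
     (\<forall>k t. vderivs k g differentiable (at t)) \<and>
     (\<forall>t. vector_derivative g (at t) \<noteq> 0) \<and>
     inj_on g {0..<1}"

definition lies_left_of_arc :: "complex set \<Rightarrow> (complex \<Rightarrow> complex) \<Rightarrow> bool" where
  "lies_left_of_arc U f \<longleftrightarrow>
     (\<forall>t\<in>{0<..<1::real}. \<exists>\<delta>>0. \<forall>\<epsilon>. 0 < \<epsilon> \<and> \<epsilon> < \<delta> \<longrightarrow>
        f (complex_of_real t) + \<i> * complex_of_real \<epsilon> * deriv f (complex_of_real t) \<in> U)"

end

theory Submission
  imports Defs
begin

(*
  Away from \<plusminus>1 the boundary values of w on \<Gamma> form a continuous branch of sqrt(z\<^sup>2 - 1):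
  normal coordinates along the smooth curve show that the interior \<Omega> is connected near each
  point of \<Gamma>, so w differs from any local continuous root by a constant sign there.
  Given \<tau>1, \<tau>2 with |1 - \<tau>1\<^sup>2| \<le> |1 - \<tau>2\<^sup>2|, either |\<tau>1 - \<tau>2| is large compared with
  |1 - \<tau>1\<^sup>2|, and then both boundary values are small, or the short arc of \<Gamma> from \<tau>1 to \<tau>2
  stays where z\<^sup>2 - 1 is close to \<tau>1\<^sup>2 - 1, so the branch cannot change sign along it and
  |w(\<tau>1) + w(\<tau>2)| \<ge> |w(\<tau>1)|. Either way |w(\<tau>1) - w(\<tau>2)| |w(\<tau>1)| \<le> C |\<tau>1 - \<tau>2|, and the
  bound for 1/w\<^sup>N follows from the mean value estimate for z \<mapsto> z\<^sup>N on the disc of radius 1/|w(\<tau>1)|.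
*)

section \<open>Smooth Jordan parametrisations\<close>

lemma smooth_jordan_param_vderivs:
  assumes "smooth_jordan_param g"
  shows "(vderivs k g has_vector_derivative vderivs (Suc k) g t) (at t)"
    and "continuous_on S (vderivs k g)"
proof -
  have diff: "vderivs k g differentiable (at t)" for t
    using assms by (simp add: smooth_jordan_param_def)
  show "(vderivs k g has_vector_derivative vderivs (Suc k) g t) (at t)"
    using diff vector_derivative_works by auto
  show "continuous_on S (vderivs k g)"
    using diff by (simp add: continuous_at_imp_continuous_on differentiable_imp_continuous_within)
qed

lemma smooth_jordan_param_periodic:
  assumes "smooth_jordan_param g"
  shows "g (x + of_int n) = g x"
proof (induction n arbitrary: x rule: int_induct[where k = 0])
  case (step1 i)
  have "g (x + of_int (i + 1)) = g ((x + of_int i) + 1)" by (simp add: algebra_simps)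
  with assms step1.IH show ?case by (simp add: smooth_jordan_param_def)
next
  case (step2 i)
  have "g (x + of_int i) = g ((x + of_int (i - 1)) + 1)" by (simp add: algebra_simps)
  with assms step2.IH show ?case by (simp only: smooth_jordan_param_def)
qed simp

lemma smooth_jordan_param_frac:
  assumes "smooth_jordan_param g"
  shows "g (frac x) = g x"
  using smooth_jordan_param_periodic[OF assms, of "frac x" "\<lfloor>x\<rfloor>"] by (simp add: frac_def)

lemma smooth_jordan_param_range:
  assumes "smooth_jordan_param g"
  shows "range g = g ` {0..1}"
proof -
  have "g x \<in> g ` {0..1}" for x
    using smooth_jordan_param_frac[OF assms, of x] frac_lt_1[of x] frac_ge_0[of x]
    by (metis atLeastAtMost_iff imageI less_imp_le)
  then show ?thesis by blast
qed

lemma smooth_jordan_param_eqD: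
  assumes "smooth_jordan_param g" "g s = g t" "\<bar>s - t\<bar> < 1"
  shows "s = t"
proof -
  have "g (frac s) = g (frac t)"
    using assms smooth_jordan_param_frac by metis
  then have "frac s = frac t"
    using assms(1) frac_lt_1[of s] frac_lt_1[of t] frac_ge_0[of s] frac_ge_0[of t]
    by (auto simp: smooth_jordan_param_def inj_on_def)
  then have "s - t = of_int (\<lfloor>s\<rfloor> - \<lfloor>t\<rfloor>)" by (simp add: frac_def)
  with assms(3) have "\<lfloor>s\<rfloor> - \<lfloor>t\<rfloor> = 0" by linarith
  then show ?thesis using \<open>s - t = _\<close> by simp
qed

lemma smooth_jordan_param_near_preimage:
  assumes "smooth_jordan_param g"
  obtains s' where "g s' = g s" "\<bar>s' - t\<bar> \<le> 1/2"
proof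
  show "g (s + of_int (- round (s - t))) = g s" by (rule smooth_jordan_param_periodic[OF assms])
  show "\<bar>s + of_int (- round (s - t)) - t\<bar> \<le> 1/2"
    using of_int_round_abs_le[of "s - t"] by (simp add: abs_minus_commute algebra_simps)
qed

lemma smooth_jordan_param_normalize_pair:
  assumes "smooth_jordan_param g"
  obtains s0 t0 where "s0 \<in> {0..1}" "s0 - t0 = s - t" "g s0 = g s" "g t0 = g t"
proof
  show "s - of_int \<lfloor>s\<rfloor> \<in> {0..1}" using frac_lt_1[of s] by (simp add: frac_def)
  show "g (s - of_int \<lfloor>s\<rfloor>) = g s" "g (t - of_int \<lfloor>s\<rfloor>) = g t"
    using smooth_jordan_param_periodic[OF assms, of _ "- \<lfloor>s\<rfloor>"] by simp_all
qed simp

lemma smooth_jordan_param_simple_loop: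
  assumes "smooth_jordan_param g"
  shows "simple_path g" "pathfinish g = pathstart g"
proof -
  have "path g"
    using smooth_jordan_param_vderivs(2)[OF assms, where k = 0 and S = "{0..1}"] by (simp add: path_def)
  moreover have "loop_free g"
    unfolding loop_free_def
  proof (intro ballI impI)
    fix x y :: real assume "x \<in> {0..1}" "y \<in> {0..1}" "g x = g y"
    then show "x = y \<or> x = 0 \<and> y = 1 \<or> x = 1 \<and> y = 0"
      using smooth_jordan_param_eqD[OF assms, of x y] by force
  qed
  ultimately show "simple_path g" by (simp add: simple_path_def)
  show "pathfinish g = pathstart g"
    using smooth_jordan_param_periodic[OF assms, of 0 1] by (simp add: pathfinish_def pathstart_def)
qed

lemma smooth_jordan_inside_outside:
  assumes "smooth_jordan_param g"
  defines "\<Gamma> \<equiv> g ` {0..1}"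
  shows "open (inside \<Gamma>)" "frontier (inside \<Gamma>) = \<Gamma>" "frontier (outside \<Gamma>) = \<Gamma>"
  using Jordan_inside_outside[OF smooth_jordan_param_simple_loop[OF assms(1)]]
  by (simp_all add: \<Gamma>_def path_image_def)

lemma vector_derivative_bounded_imp_lipschitz:
  fixes f :: "real \<Rightarrow> 'a::real_normed_vector"
  assumes "\<And>t. (f has_vector_derivative f' t) (at t)" "continuous_on {a..b} f'"
  obtains M where "M > 0" "\<And>s t. s \<in> {a..b} \<Longrightarrow> t \<in> {a..b} \<Longrightarrow> norm (f s - f t) \<le> M * \<bar>s - t\<bar>"
proof -
  obtain B where B: "B > 0" "\<And>x. x \<in> {a..b} \<Longrightarrow> norm (f' x) \<le> B"
    using compact_imp_bounded[OF compact_continuous_image[OF assms(2) compact_Icc]]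
    by (metis bounded_pos image_eqI)
  have "norm (f s - f t) \<le> B * norm (s - t)" if "s \<in> {a..b}" "t \<in> {a..b}" for s t
  proof (rule differentiable_bound[OF convex_real_interval(5)])
    show "(f has_derivative (\<lambda>h. h *\<^sub>R f' x)) (at x within {a..b})" for x
      using assms(1) has_vector_derivative_at_within by (simp add: has_vector_derivative_def) blast
    show "onorm (\<lambda>h. h *\<^sub>R f' x) \<le> B" if "x \<in> {a..b}" for x
      using onorm_scaleR_left[OF bounded_linear_ident, of "f' x"] B(2)[OF that] by (simp add: onorm_id)
  qed fact+
  then show ?thesis using that B(1) by auto
qed

lemma vector_derivative_nonzero_imp_local_lower_bound:
  fixes f :: "real \<Rightarrow> 'a::real_normed_vector"
  assumes "\<And>t. (f has_vector_derivative f' t) (at t)" "continuous_on {a..b} f'"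
    and "\<And>t. t \<in> {a..b} \<Longrightarrow> f' t \<noteq> 0" and "a \<le> b"
  obtains m \<eta> where "m > 0" "\<eta> > 0"
    "\<And>s t. s \<in> {a..b} \<Longrightarrow> t \<in> {a..b} \<Longrightarrow> \<bar>s - t\<bar> < \<eta> \<Longrightarrow> m * \<bar>s - t\<bar> \<le> norm (f s - f t)"
proof -
  have "continuous_on {a..b} (\<lambda>t. norm (f' t))"
    using assms(2) by (intro continuous_intros)
  then obtain t0 where t0: "t0 \<in> {a..b}" "\<And>t. t \<in> {a..b} \<Longrightarrow> norm (f' t0) \<le> norm (f' t)"
    using continuous_attains_inf[OF compact_Icc, of a b "\<lambda>t. norm (f' t)"] assms(4) by auto
  define m where "m = norm (f' t0)"
  have m: "m > 0" using assms(3)[OF t0(1)] by (simp add: m_def)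
  obtain \<eta> where \<eta>: "\<eta> > 0"
    "\<And>x y. x \<in> {a..b} \<Longrightarrow> y \<in> {a..b} \<Longrightarrow> dist y x < \<eta> \<Longrightarrow> dist (f' y) (f' x) < m/2"
    using compact_uniformly_continuous[OF assms(2) compact_Icc] m
    unfolding uniformly_continuous_on_def by (metis half_gt_zero)
  have "m/2 * \<bar>s - t\<bar> \<le> norm (f s - f t)"
    if st: "s \<in> {a..b}" "t \<in> {a..b}" "\<bar>s - t\<bar> < \<eta>" for s t
  proof -
    have seg: "closed_segment t s \<subseteq> {a..b}"
      using st by (simp add: closed_segment_subset)
    have "norm (f s - f t - (s - t) *\<^sub>R f' t) \<le> norm (s - t) * (m/2)"
    proof (rule vector_differentiable_bound_linearization[of "closed_segment t s", OF _ order_refl])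
      show "(f has_vector_derivative f' x) (at x within closed_segment t s)" for x
        using assms(1) has_vector_derivative_at_within by blast
      show "norm (f' x - f' t) \<le> m/2" if "x \<in> closed_segment t s" for x
      proof -
        have "dist x t < \<eta>"
          using segment_bound1[OF that] st(3) by (simp add: dist_real_def abs_minus_commute)
        moreover have "x \<in> {a..b}" using seg that by blast
        ultimately show ?thesis using \<eta>(2)[OF st(2)] by (simp add: dist_norm less_imp_le)
      qed
    qed simp
    moreover have "\<bar>s - t\<bar> * m \<le> norm ((s - t) *\<^sub>R f' t)"
      using t0(2)[OF st(2)] by (simp add: m_def mult_left_mono)
    moreover have "norm ((s - t) *\<^sub>R f' t) \<le> norm (f s - f t) + norm (f s - f t - (s - t) *\<^sub>R f' t)"
      using norm_triangle_ineq4[of "f s - f t" "f s - f t - (s - t) *\<^sub>R f' t"] by simp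
    ultimately show ?thesis by (simp add: mult.commute)
  qed
  then show ?thesis using that[of "m/2" \<eta>] m \<eta>(1) by simp
qed

lemma smooth_jordan_param_separated:
  assumes sj: "smooth_jordan_param g" and "\<eta> > 0"
  obtains \<mu> where "\<mu> > 0" "\<And>s t. \<eta> \<le> \<bar>s - t\<bar> \<Longrightarrow> \<bar>s - t\<bar> \<le> 1/2 \<Longrightarrow> \<mu> \<le> norm (g s - g t)"
proof -
  define e where "e = min \<eta> (1/4)"
  define K where "K = {0..1::real} \<times> ({-1/2..-e} \<union> {e..1/2})"
  have e: "0 < e" "e < 1/2" using assms(2) by (auto simp: e_def)
  have "compact K" unfolding K_def by (intro compact_Times compact_Un compact_Icc)
  moreover have "(0, 1/2) \<in> K" using e unfolding K_def by auto
  moreover have "continuous_on K (\<lambda>p. norm (g (fst p + snd p) - g (fst p)))"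
  proof -
    have g: "continuous_on UNIV g"
      using smooth_jordan_param_vderivs(2)[OF sj, where k = 0] by simp
    have "continuous_on UNIV (\<lambda>p::real \<times> real. g (fst p + snd p))"
      "continuous_on UNIV (\<lambda>p::real \<times> real. g (fst p))"
      by (rule continuous_on_compose2[OF g]; auto intro!: continuous_intros)+
    then show ?thesis
      by (intro continuous_on_norm continuous_on_diff) (auto elim: continuous_on_subset)
  qed
  ultimately obtain p0 where p0: "p0 \<in> K"
    "\<And>p. p \<in> K \<Longrightarrow> norm (g (fst p0 + snd p0) - g (fst p0)) \<le> norm (g (fst p + snd p) - g (fst p))"
    using continuous_attains_inf[of K] by blast
  define \<mu> where "\<mu> = norm (g (fst p0 + snd p0) - g (fst p0))"
  have "\<mu> > 0"
  proof -
    have "fst p0 + snd p0 \<noteq> fst p0" "\<bar>(fst p0 + snd p0) - fst p0\<bar> < 1"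
      using p0(1) e by (auto simp: K_def)
    then show ?thesis
      using smooth_jordan_param_eqD[OF sj, of "fst p0 + snd p0" "fst p0"] by (auto simp: \<mu>_def)
  qed
  moreover have "\<mu> \<le> norm (g s - g t)" if "\<eta> \<le> \<bar>s - t\<bar>" "\<bar>s - t\<bar> \<le> 1/2" for s t
  proof -
    obtain s0 t0 where st0: "s0 \<in> {0..1}" "s0 - t0 = s - t" "g s0 = g s" "g t0 = g t"
      using smooth_jordan_param_normalize_pair[OF sj] .
    then have "(s0, t0 - s0) \<in> K" using that e by (auto simp: K_def e_def abs_le_iff)
    then have "\<mu> \<le> norm (g (s0 + (t0 - s0)) - g s0)" using p0(2) by (fastforce simp: \<mu>_def)
    then show ?thesis using st0 by (simp add: norm_minus_commute)
  qed
  ultimately show ?thesis using that by blast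
qed

lemma smooth_jordan_param_bilipschitz:
  assumes sj: "smooth_jordan_param g"
  obtains \<kappa> M where "\<kappa> > 0" "M > 0"
    "\<And>s t. \<bar>s - t\<bar> \<le> 1/2 \<Longrightarrow> \<kappa> * \<bar>s - t\<bar> \<le> norm (g s - g t)"
    "\<And>s t. \<bar>s - t\<bar> \<le> 1/2 \<Longrightarrow> norm (g s - g t) \<le> M * \<bar>s - t\<bar>"
proof -
  note deriv = smooth_jordan_param_vderivs(1)[OF sj, where k = 0, simplified]
  note cont = smooth_jordan_param_vderivs(2)[OF sj, where k = 1, simplified]
  have nz: "vderivs 1 g t \<noteq> 0" for t using sj by (simp add: smooth_jordan_param_def)
  obtain M where M: "M > 0" "\<And>s t. s \<in> {-1..2} \<Longrightarrow> t \<in> {-1..2} \<Longrightarrow> norm (g s - g t) \<le> M * \<bar>s - t\<bar>"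
    using vector_derivative_bounded_imp_lipschitz[OF deriv cont] by blast
  obtain m \<eta> where m\<eta>: "m > 0" "\<eta> > 0"
    "\<And>s t. s \<in> {-1..2} \<Longrightarrow> t \<in> {-1..2} \<Longrightarrow> \<bar>s - t\<bar> < \<eta> \<Longrightarrow> m * \<bar>s - t\<bar> \<le> norm (g s - g t)"
    using vector_derivative_nonzero_imp_local_lower_bound[OF deriv cont, of "-1" 2] nz by auto
  obtain \<mu> where \<mu>: "\<mu> > 0" "\<And>s t. \<eta> \<le> \<bar>s - t\<bar> \<Longrightarrow> \<bar>s - t\<bar> \<le> 1/2 \<Longrightarrow> \<mu> \<le> norm (g s - g t)"
    using smooth_jordan_param_separated[OF sj m\<eta>(2)] by blast
  define \<kappa> where "\<kappa> = min m (2 * \<mu>)"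
  have near: "s0 \<in> {-1..2}" "t0 \<in> {-1..2}"
    if "s0 \<in> {0..1}" "s0 - t0 = s - t" "\<bar>s - t\<bar> \<le> 1/2" for s t s0 t0 :: real
    using that unfolding atLeastAtMost_iff abs_le_iff by linarith+
  show ?thesis
  proof
    show "\<kappa> > 0" using m\<eta>(1) \<mu>(1) by (simp add: \<kappa>_def)
    show "M > 0" by (fact M(1))
  next
    fix s t :: real assume st: "\<bar>s - t\<bar> \<le> 1/2"
    obtain s0 t0 where st0: "s0 \<in> {0..1}" "s0 - t0 = s - t" "g s0 = g s" "g t0 = g t"
      using smooth_jordan_param_normalize_pair[OF sj] .
    show "norm (g s - g t) \<le> M * \<bar>s - t\<bar>"
      using M(2)[OF near[OF st0(1,2) st]] st0 by simp
    show "\<kappa> * \<bar>s - t\<bar> \<le> norm (g s - g t)"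
    proof (cases "\<bar>s - t\<bar> < \<eta>")
      case True
      have "\<kappa> * \<bar>s - t\<bar> \<le> m * \<bar>s - t\<bar>" by (simp add: \<kappa>_def mult_right_mono)
      also have "\<dots> \<le> norm (g s - g t)"
        using m\<eta>(3)[OF near[OF st0(1,2) st]] True st0 by simp
      finally show ?thesis .
    next
      case False
      have "\<kappa> * \<bar>s - t\<bar> \<le> 2 * \<mu> * (1/2)"
        using st \<mu>(1) by (intro mult_mono) (auto simp: \<kappa>_def)
      then show ?thesis using \<mu>(2)[of s t] False st by simp
    qed
  qed
qed

lemma smooth_jordan_param_chord_arc:
  assumes sj: "smooth_jordan_param g"
  obtains c where "c > 0" "\<And>\<tau>1 \<tau>2. \<tau>1 \<in> g ` {0..1} \<Longrightarrow> \<tau>2 \<in> g ` {0..1} \<Longrightarrow>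
    \<exists>A \<subseteq> g ` {0..1}. connected A \<and> \<tau>1 \<in> A \<and> \<tau>2 \<in> A \<and> (\<forall>p\<in>A. norm (p - \<tau>1) \<le> c * norm (\<tau>1 - \<tau>2))"
proof -
  obtain \<kappa> M where \<kappa>M: "\<kappa> > 0" "M > 0"
    "\<And>s t. \<bar>s - t\<bar> \<le> 1/2 \<Longrightarrow> \<kappa> * \<bar>s - t\<bar> \<le> norm (g s - g t)"
    "\<And>s t. \<bar>s - t\<bar> \<le> 1/2 \<Longrightarrow> norm (g s - g t) \<le> M * \<bar>s - t\<bar>"
    using smooth_jordan_param_bilipschitz[OF sj] by metis
  have "\<exists>A \<subseteq> g ` {0..1}. connected A \<and> \<tau>1 \<in> A \<and> \<tau>2 \<in> A \<and>
      (\<forall>p\<in>A. norm (p - \<tau>1) \<le> M / \<kappa> * norm (\<tau>1 - \<tau>2))"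
    if \<tau>: "\<tau>1 \<in> g ` {0..1}" "\<tau>2 \<in> g ` {0..1}" for \<tau>1 \<tau>2
  proof -
    obtain s1 s2 where s: "\<tau>1 = g s1" "\<tau>2 = g s2" using \<tau> by blast
    obtain s2' where s2': "g s2' = g s2" "\<bar>s2' - s1\<bar> \<le> 1/2"
      using smooth_jordan_param_near_preimage[OF sj] .
    define A where "A = g ` closed_segment s1 s2'"
    have "A \<subseteq> g ` {0..1}" using smooth_jordan_param_range[OF sj] by (auto simp: A_def)
    moreover have "connected A"
      unfolding A_def using smooth_jordan_param_vderivs(2)[OF sj, where k = 0]
      by (intro connected_continuous_image connected_segment) simp
    moreover have "\<tau>1 \<in> A" "\<tau>2 \<in> A"
      unfolding A_def s s2'(1)[symmetric] by (rule imageI, rule ends_in_segment)+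
    moreover have "norm (p - \<tau>1) \<le> M / \<kappa> * norm (\<tau>1 - \<tau>2)" if "p \<in> A" for p
    proof -
      obtain u where u: "u \<in> closed_segment s1 s2'" "p = g u" using \<open>p \<in> A\<close> by (auto simp: A_def)
      have u_s1: "\<bar>u - s1\<bar> \<le> \<bar>s2' - s1\<bar>" using segment_bound1[OF u(1)] by simp
      have "norm (p - \<tau>1) \<le> M * \<bar>u - s1\<bar>" using \<kappa>M(4)[of u s1] u_s1 s2'(2) u(2) s(1) by simp
      also have "\<dots> \<le> M * \<bar>s2' - s1\<bar>" using u_s1 \<kappa>M(2) by simp
      also have "\<dots> \<le> M / \<kappa> * norm (\<tau>1 - \<tau>2)"
        using \<kappa>M(3)[of s1 s2'] \<kappa>M(1,2) s s2' by (simp add: field_simps abs_minus_commute)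
      finally show ?thesis .
    qed
    ultimately show ?thesis by blast
  qed
  then show ?thesis using that[of "M / \<kappa>"] \<kappa>M(1,2) by simp
qed

section \<open>Normal coordinates and local connectedness of the interior\<close>

text \<open>Normal coordinates: \<open>Re z\<close> moves along the curve, \<open>Im z\<close> along its normal \<open>\<i> g'(Re z)\<close>.\<close>
definition tubular_map :: "(real \<Rightarrow> complex) \<Rightarrow> complex \<Rightarrow> complex" where
  "tubular_map g z = g (Re z) + \<i> * complex_of_real (Im z) * vderivs 1 g (Re z)"

lemma tubular_map_of_real [simp]: "tubular_map g (complex_of_real t) = g t"
  by (simp add: tubular_map_def)

lemma tubular_map_has_derivative:
  assumes sj: "smooth_jordan_param g"
  shows "(tubular_map g has_derivative (\<lambda>v. Re v *\<^sub>R (vderivs 1 g (Re z) + \<i> * complex_of_real (Im z) * vderivs 2 g (Re z))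
            + Im v *\<^sub>R (\<i> * vderivs 1 g (Re z)))) (at z)"
proof -
  have dRe: "(Re has_derivative Re) (at z)"
    by (rule bounded_linear.has_derivative[OF bounded_linear_Re has_derivative_ident])
  have dIm: "((\<lambda>x. complex_of_real (Im x)) has_derivative (\<lambda>x. complex_of_real (Im x))) (at z)"
    by (rule bounded_linear.has_derivative[OF bounded_linear_of_real
          bounded_linear.has_derivative[OF bounded_linear_Im has_derivative_ident]])
  have dv: "((\<lambda>z. vderivs k g (Re z)) has_derivative (\<lambda>v. Re v *\<^sub>R vderivs (Suc k) g (Re z))) (at z)" for k
    using has_derivative_compose[OF dRe smooth_jordan_param_vderivs(1)[OF sj, of k "Re z",
          unfolded has_vector_derivative_def]] by simp
  have "(tubular_map g has_derivative (\<lambda>v. Re v *\<^sub>R vderivs 1 g (Re z)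
          + (\<i> * complex_of_real (Im z) * (Re v *\<^sub>R vderivs 2 g (Re z))
          + \<i> * complex_of_real (Im v) * vderivs 1 g (Re z)))) (at z)"
    unfolding tubular_map_def
    using dv[of 0] dv[of 1] by (auto intro!: derivative_eq_intros dIm simp: numeral_2_eq_2)
  then show ?thesis
    by (rule has_derivative_eq_rhs) (simp add: fun_eq_iff algebra_simps scaleR_conv_of_real)
qed

lemma continuous_tubular_map:
  assumes "smooth_jordan_param g"
  shows "continuous_on S (tubular_map g)"
  using tubular_map_has_derivative[OF assms] has_derivative_continuous
  by (blast intro: continuous_at_imp_continuous_on)

lemma tubular_map_local_homeomorphism:
  assumes sj: "smooth_jordan_param g"
  obtains U V \<psi> where "open U" "complex_of_real t \<in> U" "open V" "homeomorphism U V (tubular_map g) \<psi>"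
proof -
  define A where "A z = vderivs 1 g (Re z) + \<i> * complex_of_real (Im z) * vderivs 2 g (Re z)" for z
  define B where "B z = \<i> * vderivs 1 g (Re z)" for z
  have lin: "bounded_linear (\<lambda>v. Re v *\<^sub>R A z + Im v *\<^sub>R B z)" for z
    by (intro bounded_linear_add bounded_linear_compose[OF bounded_linear_scaleR_left bounded_linear_Re]
        bounded_linear_compose[OF bounded_linear_scaleR_left bounded_linear_Im])
  define D where "D z = Blinfun (\<lambda>v. Re v *\<^sub>R A z + Im v *\<^sub>R B z)" for z
  have D: "blinfun_apply (D z) v = Re v *\<^sub>R A z + Im v *\<^sub>R B z" for z v
    using lin by (simp add: D_def bounded_linear_Blinfun_apply)
  have deriv: "(tubular_map g has_derivative blinfun_apply (D z)) (at z)" for z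
    using tubular_map_has_derivative[OF sj, of z] by (simp add: D[abs_def] A_def B_def)
  have "continuous_on UNIV (\<lambda>z. vderivs k g (Re z))" for k
    using smooth_jordan_param_vderivs(2)[OF sj] by (rule continuous_on_compose2) (auto intro!: continuous_intros)
  then have "continuous_on UNIV A" "continuous_on UNIV B"
    unfolding A_def B_def by (auto intro!: continuous_intros simp del: vderivs.simps)
  then have contD: "continuous_on UNIV D"
    by (intro continuous_on_blinfun_componentwise) (auto simp: Basis_complex_def D)
  have nz: "vderivs 1 g t \<noteq> 0" using sj by (simp add: smooth_jordan_param_def)
  have "Re v *\<^sub>R vderivs 1 g t + Im v *\<^sub>R (\<i> * vderivs 1 g t) = v * vderivs 1 g t" for v
    by (simp add: complex_eq_iff algebra_simps)
  moreover have "bounded_linear (\<lambda>v::complex. v / vderivs 1 g t)" by (rule bounded_linear_divide)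
  ultimately have inv: "Blinfun (\<lambda>v. v / vderivs 1 g t) o\<^sub>L D (complex_of_real t) = id_blinfun"
    using nz by (intro blinfun_eqI) (simp add: bounded_linear_Blinfun_apply D A_def B_def del: vderivs.simps)
  show ?thesis
    using inverse_function_theorem[OF open_UNIV deriv contD UNIV_I inv] that by metis
qed

lemma tubular_map_chart:
  assumes sj: "smooth_jordan_param g" and "\<epsilon> > 0"
  obtains a where "a > 0" "open (tubular_map g ` ball (complex_of_real t) a)"
    "tubular_map g ` ball (complex_of_real t) a \<subseteq> ball (g t) \<epsilon>"
    "\<And>z. z \<in> ball (complex_of_real t) a \<Longrightarrow> tubular_map g z \<in> range g \<Longrightarrow> Im z = 0"
proof -
  define x0 where "x0 = complex_of_real t"
  obtain U V \<psi> where hom: "open U" "x0 \<in> U" "open V" "homeomorphism U V (tubular_map g) \<psi>"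
    using tubular_map_local_homeomorphism[OF sj] unfolding x0_def by metis
  have inj: "inj_on (tubular_map g) U"
    using homeomorphism_apply1[OF hom(4)] by (metis inj_on_inverseI)
  obtain r where r: "r > 0" "ball x0 r \<subseteq> U" using hom(1,2) open_contains_ball by blast
  obtain \<kappa> where \<kappa>: "\<kappa> > 0" "\<And>s t. \<bar>s - t\<bar> \<le> 1/2 \<Longrightarrow> \<kappa> * \<bar>s - t\<bar> \<le> norm (g s - g t)"
    using smooth_jordan_param_bilipschitz[OF sj] by metis
  define a0 where "a0 = min r (1/2)"
  have a0: "a0 > 0" using r(1) by (simp add: a0_def)
  have "isCont (tubular_map g) x0"
    using continuous_tubular_map[OF sj, of UNIV] by (simp add: continuous_on_eq_continuous_at)
  moreover have "min \<epsilon> (\<kappa> * a0) > 0" using assms(2) \<kappa>(1) a0 by simp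
  ultimately obtain r2 where r2: "r2 > 0"
    "\<And>z. dist z x0 < r2 \<Longrightarrow> dist (tubular_map g z) (g t) < min \<epsilon> (\<kappa> * a0)"
    unfolding continuous_at_eps_delta by (metis tubular_map_of_real x0_def)
  define a where "a = min a0 r2"
  have a: "a > 0" "ball x0 a \<subseteq> U" using a0 r2(1) r(2) by (auto simp: a_def a0_def)
  have near: "dist (g t) (tubular_map g z) < min \<epsilon> (\<kappa> * a0)" if "z \<in> ball x0 a" for z
    using r2(2)[of z] that by (simp add: a_def dist_commute)
  show ?thesis
  proof
    show "open (tubular_map g ` ball (complex_of_real t) a)"
      using homeomorphism_imp_open_map[OF hom(4) open_subset[OF a(2) open_ball]] hom(3)
        openin_open_trans unfolding x0_def by blast
    show "tubular_map g ` ball (complex_of_real t) a \<subseteq> ball (g t) \<epsilon>"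
      using near unfolding x0_def by auto
  next
    fix z assume z: "z \<in> ball (complex_of_real t) a" and "tubular_map g z \<in> range g"
    then obtain s where s: "tubular_map g z = g s" by auto
    obtain s' where s': "g s' = g s" "\<bar>s' - t\<bar> \<le> 1/2"
      using smooth_jordan_param_near_preimage[OF sj] .
    txt \<open>The chart image lies within \<open>\<kappa> a0\<close> of \<open>g t\<close>, so by the lower bilipschitz bound the
      parameter \<open>s'\<close> is within \<open>a0\<close> of \<open>t\<close>, where the chart is injective.\<close>
    show "Im z = 0"
    proof (cases "\<bar>s' - t\<bar> < a0")
      case True
      then have "complex_of_real s' \<in> U"
        using r(2) by (auto simp: a0_def x0_def dist_complex_def simp flip: of_real_diff)
      moreover have "z \<in> U" using z a(2) by (auto simp: x0_def)
      moreover have "tubular_map g (complex_of_real s') = tubular_map g z" using s s' by simp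
      ultimately have "z = complex_of_real s'" using inj by (metis inj_on_eq_iff)
      then show ?thesis by simp
    next
      case False
      have "\<kappa> * a0 \<le> \<kappa> * \<bar>t - s'\<bar>" using False \<kappa>(1) by (simp add: abs_minus_commute)
      also have "\<dots> \<le> norm (g t - g s')" using \<kappa>(2)[of t s'] s'(2) by (simp add: abs_minus_commute)
      also have "\<dots> < \<kappa> * a0" using near[of z] z s s' by (simp add: x0_def dist_norm)
      finally show ?thesis by simp
    qed
  qed (use a in auto)
qed

lemma connected_subset_inside_or_outside:
  fixes \<Gamma> :: "'a::real_normed_vector set"
  assumes "closed \<Gamma>" "connected S" "S \<inter> \<Gamma> = {}"
  shows "S \<subseteq> inside \<Gamma> \<or> S \<subseteq> outside \<Gamma>"
  using connectedD[OF assms(2) open_inside[OF assms(1)] open_outside[OF assms(1)]] assms(3)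
    inside_Un_outside[of \<Gamma>] inside_Int_outside[of \<Gamma>] by blast

lemma connected_inside_Int_two_sides:
  fixes \<Gamma> :: "'a::real_normed_vector set"
  assumes "closed \<Gamma>" "W - \<Gamma> \<subseteq> P \<union> Q" "P \<subseteq> W" "Q \<subseteq> W"
    and "connected P" "connected Q" "P \<inter> \<Gamma> = {}" "Q \<inter> \<Gamma> = {}" "W \<inter> outside \<Gamma> \<noteq> {}"
  shows "connected (inside \<Gamma> \<inter> W)"
proof -
  have side: "connected (inside \<Gamma> \<inter> W)"
    if "W - \<Gamma> \<subseteq> P' \<union> Q'" "Q' \<subseteq> W" "P' \<inter> outside \<Gamma> \<noteq> {}"
      "connected P'" "connected Q'" "P' \<inter> \<Gamma> = {}" "Q' \<inter> \<Gamma> = {}" for P' Q'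
  proof -
    have "P' \<subseteq> outside \<Gamma>"
      using connected_subset_inside_or_outside[OF assms(1) that(4,6)] that(3)
        inside_Int_outside[of \<Gamma>] by blast
    then have "inside \<Gamma> \<inter> W \<subseteq> Q'"
      using that(1) inside_Int_outside[of \<Gamma>] inside_no_overlap[of \<Gamma>] by blast
    then have "inside \<Gamma> \<inter> W = Q' \<or> inside \<Gamma> \<inter> W = {}"
      using connected_subset_inside_or_outside[OF assms(1) that(5,7)] that(2)
        inside_Int_outside[of \<Gamma>] by blast
    then show ?thesis using that(5) by auto
  qed
  obtain y where "y \<in> W" "y \<in> outside \<Gamma>" using assms(9) by blast
  then have "y \<in> P \<union> Q" using assms(2) outside_no_overlap[of \<Gamma>] by blast
  then show ?thesis
    using side[of P Q] side[of Q P] assms \<open>y \<in> outside \<Gamma>\<close> by blast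
qed

lemma smooth_jordan_inside_locally_connected:
  assumes sj: "smooth_jordan_param g" and "\<tau> \<in> g ` {0..1}" and "\<epsilon> > 0"
  obtains W where "open W" "\<tau> \<in> W" "W \<subseteq> ball \<tau> \<epsilon>" "connected (inside (g ` {0..1}) \<inter> W)"
proof -
  define \<Gamma> where "\<Gamma> = g ` {0..1}"
  obtain t where t: "\<tau> = g t" using assms(2) by blast
  obtain a where a: "a > 0" "open (tubular_map g ` ball (complex_of_real t) a)"
    "tubular_map g ` ball (complex_of_real t) a \<subseteq> ball (g t) \<epsilon>"
    "\<And>z. z \<in> ball (complex_of_real t) a \<Longrightarrow> tubular_map g z \<in> range g \<Longrightarrow> Im z = 0"
    using tubular_map_chart[OF sj assms(3)] by metis
  define W where "W = tubular_map g ` ball (complex_of_real t) a"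
  define P where "P = tubular_map g ` (ball (complex_of_real t) a \<inter> {z. Im z > 0})"
  define Q where "Q = tubular_map g ` (ball (complex_of_real t) a \<inter> {z. Im z < 0})"
  have range: "range g = \<Gamma>" using smooth_jordan_param_range[OF sj] by (simp add: \<Gamma>_def)
  have "\<tau> \<in> W"
    using a(1) t imageI[of "complex_of_real t" _ "tubular_map g"] by (simp add: W_def)
  have "connected (inside \<Gamma> \<inter> W)"
  proof (rule connected_inside_Int_two_sides)
    show "closed \<Gamma>"
      using compact_continuous_image[OF smooth_jordan_param_vderivs(2)[OF sj, where k = 0] compact_Icc]
      by (simp add: \<Gamma>_def compact_imp_closed)
    show "W - \<Gamma> \<subseteq> P \<union> Q"
    proof
      fix y assume "y \<in> W - \<Gamma>"
      then obtain z where z: "z \<in> ball (complex_of_real t) a" "y = tubular_map g z" "y \<notin> \<Gamma>"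
        by (auto simp: W_def)
      have "Im z \<noteq> 0"
        using z range by (auto simp: tubular_map_def)
      then show "y \<in> P \<union> Q" using z by (auto simp: P_def Q_def linorder_neq_iff)
    qed
    show "connected P" "connected Q"
      unfolding P_def Q_def
      by (intro connected_continuous_image continuous_tubular_map[OF sj] convex_connected
          convex_Int convex_ball convex_halfspace_Im_gt convex_halfspace_Im_lt)+
    show "P \<inter> \<Gamma> = {}" "Q \<inter> \<Gamma> = {}"
      using a(4) range by (force simp: P_def Q_def)+
    have "\<tau> \<in> closure (outside \<Gamma>)"
      using smooth_jordan_inside_outside(3)[OF sj] assms(2) frontier_def
      by (auto simp: \<Gamma>_def)
    then show "W \<inter> outside \<Gamma> \<noteq> {}"
      using open_Int_closure_eq_empty[of W "outside \<Gamma>"] a(2) \<open>\<tau> \<in> W\<close> by (auto simp: W_def)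
  qed (auto simp: P_def Q_def W_def)
  then show ?thesis
    using that[of W] a(2,3) \<open>\<tau> \<in> W\<close> t by (simp add: W_def \<Gamma>_def)
qed

section \<open>Boundary values of continuous square roots\<close>

lemma continuous_sqrt_boundary_values_local:
  fixes w F :: "'a::real_normed_vector \<Rightarrow> complex"
  assumes U: "open U" "continuous_on U F" "\<And>z. z \<in> U \<Longrightarrow> F z \<noteq> 0"
    and w: "continuous_on \<Omega> w" "\<And>z. z \<in> \<Omega> \<inter> U \<Longrightarrow> (w z)\<^sup>2 = F z"
    and \<tau>: "\<tau> \<in> U" "\<tau> \<in> closure \<Omega>"
    and loc_conn: "\<And>\<epsilon>. \<epsilon> > 0 \<Longrightarrow> \<exists>W. open W \<and> \<tau> \<in> W \<and> W \<subseteq> ball \<tau> \<epsilon> \<and> connected (\<Omega> \<inter> W)"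
  obtains W L where "open W" "\<tau> \<in> W" "continuous_on W L"
    "\<And>t. t \<in> W \<Longrightarrow> (w \<longlongrightarrow> L t) (at t within \<Omega>)" "\<And>t. t \<in> W \<Longrightarrow> (L t)\<^sup>2 = F t"
proof -
  obtain \<epsilon> where \<epsilon>: "\<epsilon> > 0" "ball \<tau> \<epsilon> \<subseteq> U" using U(1) \<tau>(1) open_contains_ball by blast
  obtain q where q: "continuous_on (ball \<tau> \<epsilon>) q" "\<And>z. z \<in> ball \<tau> \<epsilon> \<Longrightarrow> F z = (q z)\<^sup>2"
    using continuous_sqrt_on_contractible[OF continuous_on_subset[OF U(2) \<epsilon>(2)]
        convex_imp_contractible[OF convex_ball]] U(3) \<epsilon>(2) by blast
  have q_nz: "q z \<noteq> 0" if "z \<in> ball \<tau> \<epsilon>" for z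
    using q(2)[OF that] U(3) \<epsilon>(2) that by force
  obtain W where W: "open W" "\<tau> \<in> W" "W \<subseteq> ball \<tau> \<epsilon>" "connected (\<Omega> \<inter> W)"
    using loc_conn[OF \<epsilon>(1)] by blast
  have "\<Omega> \<inter> W \<noteq> {}" using open_Int_closure_eq_empty[OF W(1), of \<Omega>] W(2) \<tau>(2) by blast
  then obtain z0 where z0: "z0 \<in> \<Omega> \<inter> W" by blast
  have sign: "w z / q z = 1 \<or> w z / q z = -1" if "z \<in> \<Omega> \<inter> W" for z
  proof -
    have z: "z \<in> ball \<tau> \<epsilon>" "z \<in> U" using that W(3) \<epsilon>(2) by auto
    have "(w z / q z)\<^sup>2 = 1"
      using w(2)[of z] q(2)[OF z(1)] q_nz[OF z(1)] z(2) that by (simp add: power_divide)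
    then show ?thesis by (simp add: power2_eq_1_iff)
  qed
  have "continuous_on (\<Omega> \<inter> W) w" "continuous_on (\<Omega> \<inter> W) q"
    using W(3) by (auto intro: continuous_on_subset[OF w(1)] continuous_on_subset[OF q(1)])
  then have "continuous_on (\<Omega> \<inter> W) (\<lambda>z. w z / q z)"
    using W(3) q_nz by (intro continuous_on_divide) auto
  moreover have "(\<lambda>z. w z / q z) ` (\<Omega> \<inter> W) \<subseteq> {1, -1}" using sign by blast
  then have "finite ((\<lambda>z. w z / q z) ` (\<Omega> \<inter> W))" by (rule finite_subset) simp
  ultimately obtain \<sigma> where \<sigma>: "\<And>z. z \<in> \<Omega> \<inter> W \<Longrightarrow> w z / q z = \<sigma>"
    using continuous_finite_range_constant[OF W(4)] unfolding constant_on_def by blast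
  define L where "L z = \<sigma> * q z" for z
  have L_eq: "L z = w z" if "z \<in> \<Omega> \<inter> W" for z
  proof -
    have "q z \<noteq> 0" using q_nz that W(3) by blast
    then show ?thesis using \<sigma>[OF that] by (simp add: L_def divide_eq_eq)
  qed
  have contL: "continuous_on W L"
    unfolding L_def by (intro continuous_on_mult_left continuous_on_subset[OF q(1) W(3)])
  show ?thesis
  proof (rule that)
    fix t assume t: "t \<in> W"
    have "isCont L t" using contL W(1) t continuous_on_eq_continuous_at by blast
    then have "(L \<longlongrightarrow> L t) (at t within \<Omega>)"
      by (simp add: isCont_def tendsto_mono[OF at_le[OF subset_UNIV]])
    moreover have "eventually (\<lambda>x. x \<in> W) (nhds t)" by (rule eventually_nhds_in_open[OF W(1) t])
    then have "eventually (\<lambda>x. L x = w x) (at t within \<Omega>)"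
      unfolding eventually_at_filter by (rule eventually_mono) (simp add: L_eq)
    ultimately show "(w \<longlongrightarrow> L t) (at t within \<Omega>)" by (rule Lim_transform_eventually)
    have "\<sigma>\<^sup>2 = 1" using sign[OF z0] \<sigma>[OF z0] by auto
    then show "(L t)\<^sup>2 = F t" using q(2)[of t] t W(3) by (auto simp: L_def power_mult_distrib)
  qed (fact W(1) W(2) contL)+
qed

lemma continuous_sqrt_boundary_values:
  fixes w F :: "'a::real_normed_vector \<Rightarrow> complex"
  assumes "open \<Omega>" and U: "open U" "continuous_on U F" "\<And>z. z \<in> U \<Longrightarrow> F z \<noteq> 0"
    and w: "continuous_on \<Omega> w" "\<And>z. z \<in> \<Omega> \<inter> U \<Longrightarrow> (w z)\<^sup>2 = F z"
    and loc_conn: "\<And>\<tau> \<epsilon>. \<tau> \<in> frontier \<Omega> \<Longrightarrow> \<epsilon> > 0 \<Longrightarrow>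
      \<exists>W. open W \<and> \<tau> \<in> W \<and> W \<subseteq> ball \<tau> \<epsilon> \<and> connected (\<Omega> \<inter> W)"
  shows "\<And>\<tau>. \<tau> \<in> frontier \<Omega> \<inter> U \<Longrightarrow> (Lim (at \<tau> within \<Omega>) w)\<^sup>2 = F \<tau>"
    and "continuous_on (frontier \<Omega> \<inter> U) (\<lambda>\<tau>. Lim (at \<tau> within \<Omega>) w)"
proof -
  have local: "\<exists>W L. open W \<and> \<tau> \<in> W \<and> continuous_on W L \<and>
      (\<forall>t \<in> W \<inter> frontier \<Omega>. Lim (at t within \<Omega>) w = L t \<and> (L t)\<^sup>2 = F t)"
    if \<tau>: "\<tau> \<in> frontier \<Omega> \<inter> U" for \<tau>
  proof -
    obtain W L where W: "open W" "\<tau> \<in> W" "continuous_on W L"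
      "\<And>t. t \<in> W \<Longrightarrow> (w \<longlongrightarrow> L t) (at t within \<Omega>)" "\<And>t. t \<in> W \<Longrightarrow> (L t)\<^sup>2 = F t"
      using continuous_sqrt_boundary_values_local[OF U w, of \<tau>] loc_conn \<tau>
      by (metis DiffD1 IntD1 IntD2 frontier_def)
    have "Lim (at t within \<Omega>) w = L t" if "t \<in> W \<inter> frontier \<Omega>" for t
    proof (rule tendsto_Lim)
      have "t \<in> closure \<Omega>" "t \<notin> \<Omega>"
        using that interior_open[OF \<open>open \<Omega>\<close>] by (auto simp: frontier_def)
      then show "\<not> trivial_limit (at t within \<Omega>)"
        by (auto simp: trivial_limit_within closure_def)
    qed (use W(4) that in blast)
    then show ?thesis using W by blast
  qed
  show "(Lim (at \<tau> within \<Omega>) w)\<^sup>2 = F \<tau>" if "\<tau> \<in> frontier \<Omega> \<inter> U" for \<tau>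
    using local[OF that] that by (metis IntD1 IntI)
  show "continuous_on (frontier \<Omega> \<inter> U) (\<lambda>\<tau>. Lim (at \<tau> within \<Omega>) w)"
    unfolding continuous_on_eq_continuous_within
  proof
    fix \<tau> assume \<tau>: "\<tau> \<in> frontier \<Omega> \<inter> U"
    obtain W L where W: "open W" "\<tau> \<in> W" "continuous_on W L"
      "\<forall>t \<in> W \<inter> frontier \<Omega>. Lim (at t within \<Omega>) w = L t \<and> (L t)\<^sup>2 = F t"
      using local[OF \<tau>] by blast
    have "isCont L \<tau>" using W(1-3) continuous_on_eq_continuous_at by blast
    then have "(L \<longlongrightarrow> Lim (at \<tau> within \<Omega>) w) (at \<tau> within frontier \<Omega> \<inter> U)"
      using W(2,4) \<tau> by (simp add: isCont_def tendsto_mono[OF at_le[OF subset_UNIV]])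
    moreover have "eventually (\<lambda>x. x \<in> W) (nhds \<tau>)" by (rule eventually_nhds_in_open[OF W(1,2)])
    then have "eventually (\<lambda>x. L x = Lim (at x within \<Omega>) w) (at \<tau> within frontier \<Omega> \<inter> U)"
      unfolding eventually_at_filter by (rule eventually_mono) (use W(4) in auto)
    ultimately show "continuous (at \<tau> within frontier \<Omega> \<inter> U) (\<lambda>\<tau>. Lim (at \<tau> within \<Omega>) w)"
      unfolding continuous_within by (rule Lim_transform_eventually)
  qed
qed

lemma Re_neq_0_if_power2_near_norm_square:
  fixes v u z :: complex
  assumes "v\<^sup>2 = u * cnj z" "cmod (u - z) < cmod z"
  shows "Re v \<noteq> 0"
proof
  assume "Re v = 0"
  then have "Re (v\<^sup>2) \<le> 0" by (simp add: power2_eq_square)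
  then have "Re (u * cnj z) \<le> 0" using assms(1) by simp
  moreover have "u * cnj z = complex_of_real ((cmod z)\<^sup>2) + (u - z) * cnj z"
    by (simp add: complex_norm_square algebra_simps del: of_real_power)
  then have "Re (u * cnj z) \<ge> (cmod z)\<^sup>2 - cmod (u - z) * cmod z"
    using complex_Re_le_cmod[of "- ((u - z) * cnj z)"] by (simp add: norm_mult)
  moreover have "cmod (u - z) * cmod z < (cmod z)\<^sup>2"
    using assms(2) le_less_trans[OF norm_ge_zero assms(2)]
    unfolding power2_eq_square by (rule mult_strict_right_mono)
  ultimately show False by linarith
qed

lemma continuous_sqrt_same_sign_on_connected:
  fixes L F :: "'a::topological_space \<Rightarrow> complex"
  assumes "connected A" "continuous_on A L" "\<And>p. p \<in> A \<Longrightarrow> (L p)\<^sup>2 = F p"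
    and "\<And>p. p \<in> A \<Longrightarrow> cmod (F p - F \<tau>1) < cmod (F \<tau>1)" and "\<tau>1 \<in> A" "\<tau>2 \<in> A"
  shows "Re (L \<tau>2 * cnj (L \<tau>1)) > 0"
proof (rule ccontr)
  define h where "h p = Re (L p * cnj (L \<tau>1))" for p
  assume "\<not> ?thesis"
  then have "h \<tau>2 \<le> 0" by (simp add: h_def)
  moreover have "h \<tau>1 > 0"
  proof -
    have "L \<tau>1 \<noteq> 0" using assms(3-5) by force
    then show ?thesis by (simp add: h_def complex_norm_square[symmetric])
  qed
  moreover have "connected (h ` A)"
    unfolding h_def using assms(1,2) by (intro connected_continuous_image continuous_intros)
  ultimately have "0 \<in> h ` A"
    using connected_contains_Icc[of "h ` A" "h \<tau>2" "h \<tau>1"] assms(5,6) by fastforce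
  then obtain p where p: "p \<in> A" "Re (L p * cnj (L \<tau>1)) = 0" by (auto simp: h_def)
  have "(L p * cnj (L \<tau>1))\<^sup>2 = F p * cnj (F \<tau>1)"
    using assms(3)[OF p(1)] assms(3)[OF assms(5)] by (simp add: power_mult_distrib flip: complex_cnj_power)
  then show False using Re_neq_0_if_power2_near_norm_square assms(4)[OF p(1)] p(2) by blast
qed

lemma continuous_sqrt_lipschitz_estimate:
  fixes \<Gamma> :: "'a::real_normed_vector set" and F L :: "'a \<Rightarrow> complex"
  assumes "c > 0" "K > 0"
    and chord_arc: "\<And>\<tau>1 \<tau>2. \<tau>1 \<in> \<Gamma> \<Longrightarrow> \<tau>2 \<in> \<Gamma> \<Longrightarrow>
      \<exists>A \<subseteq> \<Gamma>. connected A \<and> \<tau>1 \<in> A \<and> \<tau>2 \<in> A \<and> (\<forall>p\<in>A. norm (p - \<tau>1) \<le> c * norm (\<tau>1 - \<tau>2))"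
    and F_lip: "\<And>p q. p \<in> \<Gamma> \<Longrightarrow> q \<in> \<Gamma> \<Longrightarrow> cmod (F p - F q) \<le> K * norm (p - q)"
    and L: "continuous_on {\<tau> \<in> \<Gamma>. F \<tau> \<noteq> 0} L" "\<And>\<tau>. \<tau> \<in> \<Gamma> \<Longrightarrow> F \<tau> \<noteq> 0 \<Longrightarrow> (L \<tau>)\<^sup>2 = F \<tau>"
    and \<tau>: "\<tau>1 \<in> \<Gamma>" "\<tau>2 \<in> \<Gamma>" "F \<tau>1 \<noteq> 0" "cmod (F \<tau>1) \<le> cmod (F \<tau>2)"
  shows "cmod (L \<tau>1 - L \<tau>2) * cmod (L \<tau>1) \<le> (4 * c + 1) * K * norm (\<tau>1 - \<tau>2)"
proof -
  define \<delta> where "\<delta> = norm (\<tau>1 - \<tau>2)"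
  have F2: "F \<tau>2 \<noteq> 0" using \<tau>(3,4) by auto
  have a2: "(cmod (L \<tau>1))\<^sup>2 = cmod (F \<tau>1)" and b2: "(cmod (L \<tau>2))\<^sup>2 = cmod (F \<tau>2)"
    using L(2)[OF \<tau>(1,3)] L(2)[OF \<tau>(2) F2] by (metis norm_power)+
  have ab: "cmod (L \<tau>1) \<le> cmod (L \<tau>2)"
    using a2 b2 \<tau>(4) by (metis norm_ge_zero power2_le_imp_le)
  show ?thesis
  proof (cases "cmod (F \<tau>1) \<le> 2 * K * c * \<delta>")
    case True
    have "cmod (F \<tau>2) \<le> cmod (F \<tau>1) + cmod (F \<tau>2 - F \<tau>1)" by (rule norm_triangle_sub)
    also have "\<dots> \<le> 2 * K * c * \<delta> + K * \<delta>"
      using True F_lip[OF \<tau>(2,1)] by (simp add: \<delta>_def norm_minus_commute)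
    finally have "(cmod (L \<tau>1))\<^sup>2 + (cmod (L \<tau>2))\<^sup>2 \<le> (4 * c + 1) * K * \<delta>"
      using True a2 b2 by (simp add: algebra_simps)
    moreover have "cmod (L \<tau>1 - L \<tau>2) * cmod (L \<tau>1) \<le> (cmod (L \<tau>1))\<^sup>2 + (cmod (L \<tau>2))\<^sup>2"
    proof -
      have "cmod (L \<tau>1 - L \<tau>2) * cmod (L \<tau>1) \<le> (cmod (L \<tau>1) + cmod (L \<tau>2)) * cmod (L \<tau>1)"
        by (intro mult_right_mono norm_triangle_ineq4) simp
      also have "\<dots> \<le> (cmod (L \<tau>1))\<^sup>2 + (cmod (L \<tau>2))\<^sup>2"
        using mult_right_mono[OF ab norm_ge_zero, of "L \<tau>2"] by (simp add: power2_eq_square algebra_simps)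
      finally show ?thesis .
    qed
    ultimately show ?thesis by (simp add: \<delta>_def)
  next
    case False
    obtain A where A: "A \<subseteq> \<Gamma>" "connected A" "\<tau>1 \<in> A" "\<tau>2 \<in> A"
      "\<And>p. p \<in> A \<Longrightarrow> norm (p - \<tau>1) \<le> c * \<delta>"
      using chord_arc[OF \<tau>(1,2)] unfolding \<delta>_def by blast
    have near: "cmod (F p - F \<tau>1) < cmod (F \<tau>1)" if "p \<in> A" for p
    proof -
      have "cmod (F p - F \<tau>1) \<le> K * (c * \<delta>)"
        using F_lip[of p \<tau>1] A(1,5) that \<tau>(1) assms(2) by (meson subsetD mult_left_mono less_imp_le order_trans)
      moreover have "0 \<le> K * (c * \<delta>)" using assms(1,2) by (simp add: \<delta>_def)
      moreover have "2 * K * c * \<delta> = 2 * (K * (c * \<delta>))" by simp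
      ultimately show ?thesis using False by linarith
    qed
    then have A_nz: "A \<subseteq> {\<tau> \<in> \<Gamma>. F \<tau> \<noteq> 0}" using A(1) by force
    have "Re (L \<tau>2 * cnj (L \<tau>1)) > 0"
    proof (rule continuous_sqrt_same_sign_on_connected[OF A(2) continuous_on_subset[OF L(1) A_nz]])
      show "(L p)\<^sup>2 = F p" if "p \<in> A" for p using L(2) A_nz that by blast
    qed (use near A in auto)
    then have "(cmod (L \<tau>1))\<^sup>2 \<le> (cmod (L \<tau>1 + L \<tau>2))\<^sup>2"
      unfolding cmod_power2 by (simp add: power2_eq_square algebra_simps)
    then have "cmod (L \<tau>1) \<le> cmod (L \<tau>1 + L \<tau>2)" by (rule power2_le_imp_le) simp
    then have "cmod (L \<tau>1 - L \<tau>2) * cmod (L \<tau>1) \<le> cmod ((L \<tau>1 - L \<tau>2) * (L \<tau>1 + L \<tau>2))"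
      by (simp add: norm_mult mult_left_mono)
    also have "(L \<tau>1 - L \<tau>2) * (L \<tau>1 + L \<tau>2) = F \<tau>1 - F \<tau>2"
      using L(2)[OF \<tau>(1,3)] L(2)[OF \<tau>(2) F2] by (simp add: power2_eq_square algebra_simps)
    also have "cmod \<dots> \<le> K * \<delta>" using F_lip[OF \<tau>(1,2)] by (simp add: \<delta>_def)
    also have "\<dots> \<le> (4 * c + 1) * K * \<delta>"
      using assms(1,2) by (intro mult_right_mono) (auto simp: \<delta>_def)
    finally show ?thesis by (simp add: \<delta>_def)
  qed
qed

section \<open>The estimate for the boundary values of the square root\<close>

lemma bounded_imp_lipschitz_power2:
  fixes S :: "'a::real_normed_algebra_1 set"
  assumes "bounded S"
  obtains K where "K > 0" "\<And>p q. p \<in> S \<Longrightarrow> q \<in> S \<Longrightarrow> norm (p\<^sup>2 - q\<^sup>2) \<le> K * norm (p - q)"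
proof -
  obtain R where R: "R > 0" "\<And>x. x \<in> S \<Longrightarrow> norm x \<le> R" using assms bounded_pos by blast
  have "norm (p\<^sup>2 - q\<^sup>2) \<le> 2 * R * norm (p - q)" if "p \<in> S" "q \<in> S" for p q
  proof -
    have "p\<^sup>2 - q\<^sup>2 = p * (p - q) + (p - q) * q" by (simp add: power2_eq_square algebra_simps)
    then have "norm (p\<^sup>2 - q\<^sup>2) \<le> norm p * norm (p - q) + norm (p - q) * norm q"
      by (metis norm_triangle_le norm_mult_ineq add_mono)
    also have "\<dots> \<le> R * norm (p - q) + norm (p - q) * R"
      using R(2) that by (intro add_mono mult_right_mono mult_left_mono) auto
    finally show ?thesis by simp
  qed
  then show ?thesis using that[of "2 * R"] R(1) by simp
qed

lemma norm_inverse_power_diff_le: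
  fixes x y :: "'a::real_normed_field"
  assumes "x \<noteq> 0" "norm x \<le> norm y"
  shows "norm (1 / x ^ n - 1 / y ^ n) \<le> n * norm (x - y) / norm x ^ (n + 1)"
proof -
  have "y \<noteq> 0" using assms by auto
  define z where "z = x / y"
  have "norm z \<le> 1" using assms by (simp add: z_def norm_divide divide_le_eq_1)
  have "1 - z = (y - x) / y" using \<open>y \<noteq> 0\<close> by (simp add: z_def diff_divide_distrib)
  then have "norm (1 - z) = norm (x - y) / norm y" by (simp add: norm_divide norm_minus_commute)
  also have "\<dots> \<le> norm (x - y) / norm x" using assms by (simp add: frac_le)
  finally have z1: "norm (1 - z) \<le> norm (x - y) / norm x" .
  have "norm (1 ^ n - z ^ n) \<le> n * norm (1 - z)"
    using norm_power_diff[of 1 z n] \<open>norm z \<le> 1\<close> by simp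
  also have "\<dots> \<le> n * (norm (x - y) / norm x)" by (rule mult_left_mono[OF z1]) simp
  finally have zn: "norm (1 ^ n - z ^ n) \<le> n * (norm (x - y) / norm x)" .
  have "1 / y ^ n = z ^ n / x ^ n" using assms(1) \<open>y \<noteq> 0\<close> by (simp add: z_def power_divide)
  then have "1 / x ^ n - 1 / y ^ n = (1 ^ n - z ^ n) / x ^ n" by (simp add: diff_divide_distrib)
  then have "norm (1 / x ^ n - 1 / y ^ n) = norm (1 ^ n - z ^ n) / norm x ^ n"
    by (simp add: norm_divide norm_power)
  also have "\<dots> \<le> n * (norm (x - y) / norm x) / norm x ^ n" by (rule divide_right_mono[OF zn]) simp
  also have "\<dots> = n * norm (x - y) / norm x ^ (n + 1)" by simp
  finally show ?thesis .
qed

lemma norm_inverse_power_int_diff_le: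
  fixes x y :: complex and N :: int
  assumes "x \<noteq> 0" "cmod x \<le> cmod y" "N \<ge> -1"
  shows "cmod (1 / x powi N - 1 / y powi N) \<le>
    \<bar>of_int N\<bar> * (cmod (x - y) * cmod x) / (cmod x)\<^sup>2 powr (1 + N / 2)"
proof -
  have "(cmod x)\<^sup>2 powr (1 + N / 2) = (cmod x powr 2) powr (1 + N / 2)"
    using assms(1) by (simp add: powr_numeral)
  also have "\<dots> = cmod x powr (N + 2)" unfolding powr_powr by (simp add: algebra_simps)
  moreover have "cmod (1 / x powi N - 1 / y powi N) \<le>
    \<bar>of_int N\<bar> * (cmod (x - y) * cmod x) / cmod x powr (N + 2)"
  proof (cases "N = -1")
  case True
  then have "1 / x powi N - 1 / y powi N = x - y" by (simp add: power_int_minus divide_inverse)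
  moreover have "cmod x powr (N + 2) = cmod x" using True by simp
  ultimately show ?thesis using True assms(1) by simp
next
  case False
  define n where "n = nat N"
  have N: "N = int n" using False assms(3) by (simp add: n_def)
  have "1 / x powi N - 1 / y powi N = 1 / x ^ n - 1 / y ^ n" by (simp add: N)
  moreover have "cmod x powr (N + 2) = cmod x ^ (n + 1) * cmod x"
    using assms(1) powr_realpow[of "cmod x" "n + 2"] by (simp add: N add.commute mult.commute)
  ultimately show ?thesis
    using norm_inverse_power_diff_le[OF assms(1,2), of n] assms(1) by (simp add: N mult.commute)
qed
  ultimately show ?thesis by simp
qed

lemma smooth_jordan_sqrt_boundary_values:
  assumes sj: "smooth_jordan_param g" and \<Gamma>: "\<Gamma> = g ` {0..1}"
    and w: "continuous_on (inside \<Gamma>) w" "\<And>z. z \<in> inside \<Gamma> \<Longrightarrow> (w z)\<^sup>2 = z\<^sup>2 - 1"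
  shows "\<And>\<tau>. \<tau> \<in> \<Gamma> \<Longrightarrow> \<tau>\<^sup>2 \<noteq> 1 \<Longrightarrow> (Lim (at \<tau> within inside \<Gamma>) w)\<^sup>2 = \<tau>\<^sup>2 - 1"
    and "continuous_on {\<tau> \<in> \<Gamma>. \<tau>\<^sup>2 \<noteq> 1} (\<lambda>\<tau>. Lim (at \<tau> within inside \<Gamma>) w)"
proof -
  note inside = smooth_jordan_inside_outside(1,2)[OF sj, folded \<Gamma>]
  have loc_conn: "\<exists>W. open W \<and> \<tau> \<in> W \<and> W \<subseteq> ball \<tau> \<epsilon> \<and> connected (inside \<Gamma> \<inter> W)"
    if \<tau>: "\<tau> \<in> frontier (inside \<Gamma>)" and \<epsilon>: "\<epsilon> > 0" for \<tau> \<epsilon>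
  proof -
    have "\<tau> \<in> g ` {0..1}" using \<tau> inside(2) \<Gamma> by simp
    then obtain W where "open W" "\<tau> \<in> W" "W \<subseteq> ball \<tau> \<epsilon>" "connected (inside \<Gamma> \<inter> W)"
      using smooth_jordan_inside_locally_connected[OF sj _ \<epsilon>] unfolding \<Gamma> by metis
    then show ?thesis by blast
  qed
  have U_open: "open (- {1, -1 :: complex})" by (intro open_Compl finite_imp_closed) simp
  have F_cont: "continuous_on (- {1, -1}) (\<lambda>z::complex. z\<^sup>2 - 1)" by (intro continuous_intros)
  have F_nz: "z\<^sup>2 - 1 \<noteq> 0" if "z \<in> - {1, -1}" for z :: complex
    using that by (simp add: power2_eq_1_iff)
  note bv = continuous_sqrt_boundary_values[OF inside(1) U_open F_cont F_nz w(1) _ loc_conn]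
  have U: "{\<tau> \<in> \<Gamma>. \<tau>\<^sup>2 \<noteq> 1} = frontier (inside \<Gamma>) \<inter> - {1, -1}"
    using inside(2) by (auto simp: power2_eq_1_iff)
  show "(Lim (at \<tau> within inside \<Gamma>) w)\<^sup>2 = \<tau>\<^sup>2 - 1" if "\<tau> \<in> \<Gamma>" "\<tau>\<^sup>2 \<noteq> 1" for \<tau>
    using bv(1) w(2) that inside(2) by (auto simp: power2_eq_1_iff)
  show "continuous_on {\<tau> \<in> \<Gamma>. \<tau>\<^sup>2 \<noteq> 1} (\<lambda>\<tau>. Lim (at \<tau> within inside \<Gamma>) w)"
    using bv(2) w(2) unfolding U by auto
qed

lemma smooth_jordan_sqrt_lipschitz_estimate:
  assumes sj: "smooth_jordan_param g" and \<Gamma>: "\<Gamma> = g ` {0..1}"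
    and w: "continuous_on (inside \<Gamma>) w" "\<And>z. z \<in> inside \<Gamma> \<Longrightarrow> (w z)\<^sup>2 = z\<^sup>2 - 1"
  defines "L \<tau> \<equiv> Lim (at \<tau> within inside \<Gamma>) w"
  obtains C where "C > 0" "\<And>\<tau>1 \<tau>2. \<tau>1 \<in> \<Gamma> \<Longrightarrow> \<tau>2 \<in> \<Gamma> \<Longrightarrow> \<tau>1\<^sup>2 \<noteq> 1 \<Longrightarrow>
    cmod (1 - \<tau>1\<^sup>2) \<le> cmod (1 - \<tau>2\<^sup>2) \<Longrightarrow> cmod (L \<tau>1 - L \<tau>2) * cmod (L \<tau>1) \<le> C * cmod (\<tau>1 - \<tau>2)"
proof -
  obtain c where c: "c > 0" "\<And>\<tau>1 \<tau>2. \<tau>1 \<in> \<Gamma> \<Longrightarrow> \<tau>2 \<in> \<Gamma> \<Longrightarrow>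
    \<exists>A \<subseteq> \<Gamma>. connected A \<and> \<tau>1 \<in> A \<and> \<tau>2 \<in> A \<and> (\<forall>p\<in>A. norm (p - \<tau>1) \<le> c * norm (\<tau>1 - \<tau>2))"
    using smooth_jordan_param_chord_arc[OF sj] unfolding \<Gamma> by metis
  have "bounded \<Gamma>"
    unfolding \<Gamma> using smooth_jordan_param_vderivs(2)[OF sj, where k = 0]
    by (intro compact_imp_bounded compact_continuous_image compact_Icc) simp
  then obtain K where K: "K > 0" "\<And>p q. p \<in> \<Gamma> \<Longrightarrow> q \<in> \<Gamma> \<Longrightarrow> cmod ((p\<^sup>2 - 1) - (q\<^sup>2 - 1)) \<le> K * cmod (p - q)"
    using bounded_imp_lipschitz_power2 by (metis diff_diff_eq2 diff_add_cancel)
  have cont: "continuous_on {\<tau> \<in> \<Gamma>. \<tau>\<^sup>2 - 1 \<noteq> 0} L"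
    using smooth_jordan_sqrt_boundary_values(2)[OF sj \<Gamma> w] by (simp add: L_def)
  have sq: "(L \<tau>)\<^sup>2 = \<tau>\<^sup>2 - 1" if "\<tau> \<in> \<Gamma>" "\<tau>\<^sup>2 - 1 \<noteq> 0" for \<tau>
    using smooth_jordan_sqrt_boundary_values(1)[OF sj \<Gamma> w] that by (simp add: L_def)
  show ?thesis
  proof (rule that)
    fix \<tau>1 \<tau>2 assume \<tau>: "\<tau>1 \<in> \<Gamma>" "\<tau>2 \<in> \<Gamma>" "\<tau>1\<^sup>2 \<noteq> 1" "cmod (1 - \<tau>1\<^sup>2) \<le> cmod (1 - \<tau>2\<^sup>2)"
    then have "\<tau>1\<^sup>2 - 1 \<noteq> 0" "cmod (\<tau>1\<^sup>2 - 1) \<le> cmod (\<tau>2\<^sup>2 - 1)" by (simp_all add: norm_minus_commute)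
    from continuous_sqrt_lipschitz_estimate[OF c(1) K(1) c(2) K(2) cont sq \<tau>(1,2) this]
    show "cmod (L \<tau>1 - L \<tau>2) * cmod (L \<tau>1) \<le> (4 * c + 1) * K * cmod (\<tau>1 - \<tau>2)" .
  qed (use c(1) K(1) in simp)
qed

lemma smooth_jordan_sqrt_inverse_power_estimate:
  assumes sj: "smooth_jordan_param g" and \<Gamma>: "\<Gamma> = g ` {0..1}"
    and w: "continuous_on (inside \<Gamma>) w" "\<And>z. z \<in> inside \<Gamma> \<Longrightarrow> (w z)\<^sup>2 = z\<^sup>2 - 1"
  defines "L \<tau> \<equiv> Lim (at \<tau> within inside \<Gamma>) w"
  shows "\<exists>C. \<forall>N \<tau>1 \<tau>2. N \<ge> -1 \<longrightarrow> \<tau>1 \<in> \<Gamma> \<longrightarrow> \<tau>2 \<in> \<Gamma> \<longrightarrow> \<tau>1\<^sup>2 \<noteq> 1 \<longrightarrow> \<tau>2\<^sup>2 \<noteq> 1 \<longrightarrow>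
    cmod (1 - \<tau>1\<^sup>2) \<le> cmod (1 - \<tau>2\<^sup>2) \<longrightarrow>
    cmod (1 / L \<tau>1 powi N - 1 / L \<tau>2 powi N) \<le> C * \<bar>of_int N\<bar> *
      max (1 / cmod (1 - \<tau>1\<^sup>2) powr (1 + N / 2)) (1 / cmod (1 - \<tau>2\<^sup>2) powr (1 + N / 2)) *
      cmod (\<tau>1 - \<tau>2)"
proof -
  obtain C where C: "C > 0" "\<And>\<tau>1 \<tau>2. \<tau>1 \<in> \<Gamma> \<Longrightarrow> \<tau>2 \<in> \<Gamma> \<Longrightarrow> \<tau>1\<^sup>2 \<noteq> 1 \<Longrightarrow>
    cmod (1 - \<tau>1\<^sup>2) \<le> cmod (1 - \<tau>2\<^sup>2) \<Longrightarrow> cmod (L \<tau>1 - L \<tau>2) * cmod (L \<tau>1) \<le> C * cmod (\<tau>1 - \<tau>2)"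
    using smooth_jordan_sqrt_lipschitz_estimate[OF sj \<Gamma> w] unfolding L_def by metis
  have norm_L: "(cmod (L \<tau>))\<^sup>2 = cmod (1 - \<tau>\<^sup>2)" if "\<tau> \<in> \<Gamma>" "\<tau>\<^sup>2 \<noteq> 1" for \<tau>
    using smooth_jordan_sqrt_boundary_values(1)[OF sj \<Gamma> w that]
    by (simp add: L_def norm_minus_commute flip: norm_power)
  show ?thesis
  proof (intro exI allI impI)
    fix N :: int and \<tau>1 \<tau>2
    assume h: "N \<ge> -1" "\<tau>1 \<in> \<Gamma>" "\<tau>2 \<in> \<Gamma>" "\<tau>1\<^sup>2 \<noteq> 1" "\<tau>2\<^sup>2 \<noteq> 1"
      "cmod (1 - \<tau>1\<^sup>2) \<le> cmod (1 - \<tau>2\<^sup>2)"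
    define e where "e = 1 + real_of_int N / 2"
    have "L \<tau>1 \<noteq> 0" "cmod (L \<tau>1) \<le> cmod (L \<tau>2)"
      using norm_L[OF h(2,4)] norm_L[OF h(3,5)] h(4,6) by (auto intro: power2_le_imp_le)
    then have "cmod (1 / L \<tau>1 powi N - 1 / L \<tau>2 powi N)
        \<le> \<bar>of_int N\<bar> * (cmod (L \<tau>1 - L \<tau>2) * cmod (L \<tau>1)) / cmod (1 - \<tau>1\<^sup>2) powr e"
      using norm_inverse_power_int_diff_le[OF _ _ h(1)] norm_L[OF h(2,4)] by (metis e_def)
    also have "\<dots> \<le> \<bar>of_int N\<bar> * (C * cmod (\<tau>1 - \<tau>2)) / cmod (1 - \<tau>1\<^sup>2) powr e"
      using C(2)[OF h(2,3,4,6)] by (intro divide_right_mono mult_left_mono) auto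
    also have "\<dots> = C * \<bar>of_int N\<bar> * (1 / cmod (1 - \<tau>1\<^sup>2) powr e) * cmod (\<tau>1 - \<tau>2)" by simp
    also have "\<dots> \<le> C * \<bar>of_int N\<bar> * max (1 / cmod (1 - \<tau>1\<^sup>2) powr e) (1 / cmod (1 - \<tau>2\<^sup>2) powr e)
        * cmod (\<tau>1 - \<tau>2)"
      using C(1) by (intro mult_right_mono mult_left_mono) auto
    finally show "cmod (1 / L \<tau>1 powi N - 1 / L \<tau>2 powi N) \<le> C * \<bar>of_int N\<bar> *
      max (1 / cmod (1 - \<tau>1\<^sup>2) powr (1 + N / 2)) (1 / cmod (1 - \<tau>2\<^sup>2) powr (1 + N / 2)) *
      cmod (\<tau>1 - \<tau>2)"
      by (simp add: e_def)
  qed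
qed

text \<open>Of the hypotheses on \<open>\<Delta>\<close> and \<open>w\<close> only \<open>\<Delta> \<subseteq> \<Gamma>\<close>, continuity and \<open>w\<^sup>2 = z\<^sup>2 - 1\<close> are used:
  the estimate holds for every continuous square root on \<open>\<Omega>\<close>, whichever side of \<open>\<Delta>\<close> it lies on
  and however it is normalised at infinity.\<close>
theorem lemma1:
  fixes f :: "complex \<Rightarrow> complex" and g :: "real \<Rightarrow> complex"
    and \<Delta> \<Gamma> \<Omega> :: "complex set" and w :: "complex \<Rightarrow> complex"
  assumes arc: "analytic_arc_param f (-1) 1"
    and \<Delta>_def: "\<Delta> = f ` complex_of_real ` {0..1}"
    and curve: "smooth_jordan_param g"
    and \<Gamma>_def: "\<Gamma> = g ` {0..1}"
    and sub: "\<Delta> \<subseteq> \<Gamma>"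
    and \<Omega>_def: "\<Omega> = inside \<Gamma>"
    and left: "lies_left_of_arc \<Omega> f"
    and w_hol: "w holomorphic_on (- \<Delta>)"
    and w_sq: "\<forall>z. z \<notin> \<Delta> \<longrightarrow> (w z)\<^sup>2 = z\<^sup>2 - 1"
    and w_inf: "((\<lambda>z. w z / z) \<longlongrightarrow> 1) at_infinity"
  shows "\<exists>C1::real. \<forall>N::int. \<forall>\<tau>1 \<tau>2.
           N \<ge> -1 \<longrightarrow> \<tau>1 \<in> \<Gamma> \<longrightarrow> \<tau>2 \<in> \<Gamma> \<longrightarrow> \<tau>1 \<noteq> \<tau>2 \<longrightarrow>
           \<tau>1\<^sup>2 \<noteq> 1 \<longrightarrow> \<tau>2\<^sup>2 \<noteq> 1 \<longrightarrow>
           cmod (1 - \<tau>1\<^sup>2) \<le> cmod (1 - \<tau>2\<^sup>2) \<longrightarrow>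
           cmod (1 / (Lim (at \<tau>1 within \<Omega>) w) powi N - 1 / (Lim (at \<tau>2 within \<Omega>) w) powi N)
             \<le> C1 * \<bar>real_of_int N\<bar> *
                max (1 / cmod (1 - \<tau>1\<^sup>2) powr (1 + real_of_int N / 2))
                    (1 / cmod (1 - \<tau>2\<^sup>2) powr (1 + real_of_int N / 2)) *
                cmod (\<tau>1 - \<tau>2)"
proof -
  have "\<Omega> \<subseteq> - \<Delta>" using sub inside_no_overlap[of \<Gamma>] unfolding \<Omega>_def by blast
  then have w: "continuous_on (inside \<Gamma>) w" "\<And>z. z \<in> inside \<Gamma> \<Longrightarrow> (w z)\<^sup>2 = z\<^sup>2 - 1"
    using continuous_on_subset[OF holomorphic_on_imp_continuous_on[OF w_hol]] w_sq
    by (auto simp: \<Omega>_def)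
  show ?thesis
    using smooth_jordan_sqrt_inverse_power_estimate[OF curve \<Gamma>_def w] unfolding \<Omega>_def by blast
qed

end
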